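(* Let $e_0,\dots,e_{14}$ be the coefficients of the numerator $\mathbf{E}_4(X)$ of the generating series $\sum_{\delta\ge0}\mathbf{T}(p^\delta)X^\delta$ for $\mathrm{Sp}_4$, given explicitly as polynomials in $p$, $T=\mathbf{T}(p)$, $T_1,T_2,T_3$, $\Delta=[\mathbf{p}]$ by: $e_0=1$, $e_1=0$, $e_2=-p^2\big((p^8+p^6+2p^4+2p^2+1)\Delta+(p^2+p+1)(p^2-p+1)T_3+T_2\big)$, $e_3=p^4(p+1)\big((p^2+1)(p^3-p^2+1)\Delta+T_3\big)T$, $e_4=p^7\big((p^2+p+1)(p^2-p+1)(p^8+3p^7+p^5+2p^3+p-1)\Delta^2+(p^2+p+1)(p^2-p+1)(2p^3+p-2)T_3\Delta-(p^2+p+1)(p^2-p+1)T_3^2+(2p^5+2p^3+p^2+p-1)T_2\Delta-T_2T_3+p(p^2+p+1)T_1\Delta-(p^2+p+1)T^2\Delta\big)$, $e_5=-p^{10}(p+1)\big((p^2+1)(p^7-p^6-p^2-1)\Delta-(p^2+1)T_3-T_2\big)T\Delta$, $e_6=p^{14}\big((p^{16}-p^{15}-2p^{14}-3p^{12}-5p^{10}-8p^8+p^7-8p^6-5p^4-4p^2-1)\Delta^3+(p^{12}-p^{10}-p^9-5p^8+2p^7-7p^6-6p^4-8p^2+p-2)T_3\Delta^2+(p^7-p^4-4p^2+2p-1)T_3^2\Delta+pT_3^3-(2p^8+3p^6+p^4-p^3+3p^2+p+1)T_2\Delta^2-(3p^2+p+1)T_2T_3\Delta-(p^6-p^3+1)T_1\Delta^2-T_1T_3\Delta+p^2(p^3+p-1)T^2\Delta^2\big)$,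 $e_7=-p^{19}(p-1)(p+1)\big((p^2+p+1)(p^2-p+1)(p^2+1)\Delta+(p^2+p+1)(p^2-p+1)T_3+T_2\big)T\Delta^2$, $e_8=-p^{24}\big((p^{16}-3p^{12}-3p^{10}-p^9-9p^8-8p^6-7p^4-5p^2+p-1)\Delta^3+(p^{10}-p^9-4p^8-6p^6-8p^4-9p^2+3p-2)T_3\Delta^2-(p^4+4p^2-3p+1)T_3^2\Delta+pT_3^3-(p^8+2p^6-p^5+2p^4+p^3+4p^2+1)T_2\Delta^2-(p^3+3p^2+1)T_2T_3\Delta+(p^5-p^2-1)T_1\Delta^2-T_1T_3\Delta-p(p^3-p^2-1)T^2\Delta^2\big)\Delta$, $e_9=p^{29}(p+1)\big((p^2+1)(p^5-2p^4-1)\Delta-(p^4+1)T_3-T_2\big)T\Delta^3$, $e_{10}=-p^{35}\big((p^2-p+1)(p^2+p+1)(p^8+2p^7+p^5+3p^3+p-1)\Delta^2-(p^2-p+1)(p^2+p+1)(p^5-3p^3-p+2)T_3\Delta-(p^2-p+1)(p^2+p+1)T_3^2+(p^5+3p^3+p^2+p-1)T_2\Delta-T_2T_3+p(p^2+p+1)T_1\Delta-(p^2+p+1)T^2\Delta\big)\Delta^3$, $e_{11}=-p^{41}(p+1)\big((p^2+1)(p^3-p^2+1)\Delta+T_3\big)T\Delta^4$, $e_{12}=p^{48}\big((2p^6+2p^4+2p^2+1)\Delta+(p^2-p+1)(p^2+p+1)T_3+T_2\big)\Delta^5$, $e_{13}=0$, $e_{14}=-p^{64}\Delta^7$. Let $\Omega(e_k)\in\mathbb{Q}(p)[x_0^{\pm1},x_1^{\pm1},\dots,x_4^{\pm1}]$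 be obtained by substituting into $e_k$ the images $\Omega(T),\Omega(T_1),\Omega(T_2),\Omega(T_3),\Omega(\Delta)$ listed in the context, regarding $p$ as an indeterminate. Then for every $k=0,\dots,14$: $$\Omega(e_{14-k})(p,x_0,x_1,x_2,x_3,x_4)=-p^{-6}\,(x_0^2x_1x_2x_3x_4)^{7-k}\;\Omega(e_k)\Big(\tfrac1p,\;x_0x_1x_2x_3x_4,\;\tfrac1{x_1},\tfrac1{x_2},\tfrac1{x_3},\tfrac1{x_4}\Big).$$
   Context: Here $\mathbf{T}(p)$, $T_i=\mathbf{T}_i(p^2)$ and $\Delta=[\mathbf{p}]$ are the standard generators of the Hecke ring of $\mathrm{Sp}_4(\mathbb{Z})$ inside the group of positive symplectic similitudes of genus 4, and $\mathbf{E}_4(X)=\sum e_kX^k$ is the numerator in $\sum_{\delta\ge0}\mathbf{T}(p^\delta)X^\delta=\mathbf{E}_4(X)/\mathbf{F}_4(X)$. The spherical (Satake) map $\Omega$ is the ring homomorphism into Laurent polynomials in $x_0,\dots,x_4$ whose values on generators are as follows. For integers $i_1\ge i_2\ge i_3\ge i_4\ge0$ let $\mathrm{sym}_{i_1i_2i_3i_4}$ denote the sum of the distinct monomials obtained from $x_1^{i_1}x_2^{i_2}x_3^{i_3}x_4^{i_4}$ by permuting $x_1,\dots,x_4$ (each with coefficient 1). Then $\Omega(\mathbf{T}(p))=x_0(\mathrm{sym}_{1111}+\mathrm{sym}_{1110}+\mathrm{sym}_{1100}+\mathrm{sym}_{1000}+1)$; $\Omega(T_1)=x_0^2p^{-8}\big((p-1)^2(p+1)(4p^4+3p^3+3p^2+p+1)\mathrm{sym}_{1111}+p^4(p-1)(3p^2+2p+1)(\mathrm{sym}_{2111}+\mathrm{sym}_{1110})+p^5(p-1)(p+1)(\mathrm{sym}_{2211}+\mathrm{sym}_{2110}+\mathrm{sym}_{1100})+p^7(\mathrm{sym}_{2221}+\mathrm{sym}_{2210}+\mathrm{sym}_{2100}+\mathrm{sym}_{1000})\big)$;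 $\Omega(T_2)=x_0^2p^{-8}\big((p-1)(4p^4+3p^3+3p^2+p+1)\mathrm{sym}_{1111}+p^2(p-1)(p^2+p+1)(\mathrm{sym}_{2111}+\mathrm{sym}_{1110})+p^5(\mathrm{sym}_{2211}+\mathrm{sym}_{2110}+\mathrm{sym}_{1100})\big)$; $\Omega(T_3)=x_0^2p^{-10}\big((p-1)(p+1)(p^2+1)\mathrm{sym}_{1111}+p^4(\mathrm{sym}_{2111}+\mathrm{sym}_{1110})\big)$; $\Omega(\Delta)=x_0^2p^{-10}\mathrm{sym}_{1111}=x_0^2p^{-10}x_1x_2x_3x_4$. *)

theory Defs
  imports Complex_Main "HOL-Combinatorics.Permutations"
begin

definition expv :: "nat \<Rightarrow> nat \<Rightarrow> nat \<Rightarrow> nat \<Rightarrow> nat \<Rightarrow> nat" where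
  "expv i1 i2 i3 i4 = (\<lambda>i. if i < 4 then [i1, i2, i3, i4] ! i else 0)"

text \<open>sym: sum of the distinct monomials obtained from x1^i1 x2^i2 x3^i3 x4^i4 by permuting
  the variables x1..x4 (here x 0, ..., x 3), each with coefficient 1.\<close>
definition msym :: "nat \<Rightarrow> nat \<Rightarrow> nat \<Rightarrow> nat \<Rightarrow> (nat \<Rightarrow> 'a::comm_ring_1) \<Rightarrow> 'a" where
  "msym i1 i2 i3 i4 x =
     (\<Sum>b \<in> {b. \<exists>\<sigma>. \<sigma> permutes {0..<4} \<and> b = expv i1 i2 i3 i4 \<circ> \<sigma>}. \<Prod>i<4. x i ^ b i)"

text \<open>Spherical map on the generators; p is the (specialised) indeterminate, x0 and
  x = (x 0, x 1, x 2, x 3) = (x1, x2, x3, x4) the Laurent variables.\<close>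
definition OmT :: "'a::field \<Rightarrow> 'a \<Rightarrow> (nat \<Rightarrow> 'a) \<Rightarrow> 'a" where
  "OmT p x0 x = x0 * (msym 1 1 1 1 x + msym 1 1 1 0 x + msym 1 1 0 0 x + msym 1 0 0 0 x + 1)"

definition OmT1 :: "'a::field \<Rightarrow> 'a \<Rightarrow> (nat \<Rightarrow> 'a) \<Rightarrow> 'a" where
  "OmT1 p x0 x = x0^2 * inverse (p^8) *
    ((p - 1)^2 * (p + 1) * (4*p^4 + 3*p^3 + 3*p^2 + p + 1) * msym 1 1 1 1 x
     + p^4 * (p - 1) * (3*p^2 + 2*p + 1) * (msym 2 1 1 1 x + msym 1 1 1 0 x)
     + p^5 * (p - 1) * (p + 1) * (msym 2 2 1 1 x + msym 2 1 1 0 x + msym 1 1 0 0 x)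
     + p^7 * (msym 2 2 2 1 x + msym 2 2 1 0 x + msym 2 1 0 0 x + msym 1 0 0 0 x))"

definition OmT2 :: "'a::field \<Rightarrow> 'a \<Rightarrow> (nat \<Rightarrow> 'a) \<Rightarrow> 'a" where
  "OmT2 p x0 x = x0^2 * inverse (p^8) *
    ((p - 1) * (4*p^4 + 3*p^3 + 3*p^2 + p + 1) * msym 1 1 1 1 x
     + p^2 * (p - 1) * (p^2 + p + 1) * (msym 2 1 1 1 x + msym 1 1 1 0 x)
     + p^5 * (msym 2 2 1 1 x + msym 2 1 1 0 x + msym 1 1 0 0 x))"

definition OmT3 :: "'a::field \<Rightarrow> 'a \<Rightarrow> (nat \<Rightarrow> 'a) \<Rightarrow> 'a" where
  "OmT3 p x0 x = x0^2 * inverse (p^10) *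
    ((p - 1) * (p + 1) * (p^2 + 1) * msym 1 1 1 1 x
     + p^4 * (msym 2 1 1 1 x + msym 1 1 1 0 x))"

definition OmDelta :: "'a::field \<Rightarrow> 'a \<Rightarrow> (nat \<Rightarrow> 'a) \<Rightarrow> 'a" where
  "OmDelta p x0 x = x0^2 * inverse (p^10) * msym 1 1 1 1 x"

definition Ecoeffs :: "'a::comm_ring_1 \<Rightarrow> 'a \<Rightarrow> 'a \<Rightarrow> 'a \<Rightarrow> 'a \<Rightarrow> 'a \<Rightarrow> 'a list" where
  "Ecoeffs p T T1 T2 T3 D =
   [ 1,
     0,
     - (p^2) * ((p^8 + p^6 + 2*p^4 + 2*p^2 + 1) * D + (p^2 + p + 1) * (p^2 - p + 1) * T3 + T2),
     p^4 * (p + 1) * ((p^2 + 1) * (p^3 - p^2 + 1) * D + T3) * T,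
     p^7 * ((p^2 + p + 1) * (p^2 - p + 1) * (p^8 + 3*p^7 + p^5 + 2*p^3 + p - 1) * D^2
            + (p^2 + p + 1) * (p^2 - p + 1) * (2*p^3 + p - 2) * T3 * D
            - (p^2 + p + 1) * (p^2 - p + 1) * T3^2
            + (2*p^5 + 2*p^3 + p^2 + p - 1) * T2 * D
            - T2 * T3 + p * (p^2 + p + 1) * T1 * D - (p^2 + p + 1) * T^2 * D),
     - (p^10) * (p + 1) * ((p^2 + 1) * (p^7 - p^6 - p^2 - 1) * D - (p^2 + 1) * T3 - T2) * T * D,
     p^14 * ((p^16 - p^15 - 2*p^14 - 3*p^12 - 5*p^10 - 8*p^8 + p^7 - 8*p^6 - 5*p^4 - 4*p^2 - 1) * D^3
            + (p^12 - p^10 - p^9 - 5*p^8 + 2*p^7 - 7*p^6 - 6*p^4 - 8*p^2 + p - 2) * T3 * D^2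
            + (p^7 - p^4 - 4*p^2 + 2*p - 1) * T3^2 * D + p * T3^3
            - (2*p^8 + 3*p^6 + p^4 - p^3 + 3*p^2 + p + 1) * T2 * D^2
            - (3*p^2 + p + 1) * T2 * T3 * D - (p^6 - p^3 + 1) * T1 * D^2
            - T1 * T3 * D + p^2 * (p^3 + p - 1) * T^2 * D^2),
     - (p^19) * (p - 1) * (p + 1) * ((p^2 + p + 1) * (p^2 - p + 1) * (p^2 + 1) * D
            + (p^2 + p + 1) * (p^2 - p + 1) * T3 + T2) * T * D^2,
     - (p^24) * ((p^16 - 3*p^12 - 3*p^10 - p^9 - 9*p^8 - 8*p^6 - 7*p^4 - 5*p^2 + p - 1) * D^3
            + (p^10 - p^9 - 4*p^8 - 6*p^6 - 8*p^4 - 9*p^2 + 3*p - 2) * T3 * D^2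
            - (p^4 + 4*p^2 - 3*p + 1) * T3^2 * D + p * T3^3
            - (p^8 + 2*p^6 - p^5 + 2*p^4 + p^3 + 4*p^2 + 1) * T2 * D^2
            - (p^3 + 3*p^2 + 1) * T2 * T3 * D + (p^5 - p^2 - 1) * T1 * D^2
            - T1 * T3 * D - p * (p^3 - p^2 - 1) * T^2 * D^2) * D,
     p^29 * (p + 1) * ((p^2 + 1) * (p^5 - 2*p^4 - 1) * D - (p^4 + 1) * T3 - T2) * T * D^3,
     - (p^35) * ((p^2 - p + 1) * (p^2 + p + 1) * (p^8 + 2*p^7 + p^5 + 3*p^3 + p - 1) * D^2
            - (p^2 - p + 1) * (p^2 + p + 1) * (p^5 - 3*p^3 - p + 2) * T3 * D
            - (p^2 - p + 1) * (p^2 + p + 1) * T3^2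
            + (p^5 + 3*p^3 + p^2 + p - 1) * T2 * D
            - T2 * T3 + p * (p^2 + p + 1) * T1 * D - (p^2 + p + 1) * T^2 * D) * D^3,
     - (p^41) * (p + 1) * ((p^2 + 1) * (p^3 - p^2 + 1) * D + T3) * T * D^4,
     p^48 * ((2*p^6 + 2*p^4 + 2*p^2 + 1) * D + (p^2 - p + 1) * (p^2 + p + 1) * T3 + T2) * D^5,
     0,
     - (p^64) * D^7 ]"

definition ecoeff :: "nat \<Rightarrow> 'a::comm_ring_1 \<Rightarrow> 'a \<Rightarrow> 'a \<Rightarrow> 'a \<Rightarrow> 'a \<Rightarrow> 'a \<Rightarrow> 'a" where
  "ecoeff k p T T1 T2 T3 D = Ecoeffs p T T1 T2 T3 D ! k"

definition OmE :: "nat \<Rightarrow> 'a::field \<Rightarrow> 'a \<Rightarrow> (nat \<Rightarrow> 'a) \<Rightarrow> 'a" where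
  "OmE k p x0 x = ecoeff k p (OmT p x0 x) (OmT1 p x0 x) (OmT2 p x0 x) (OmT3 p x0 x) (OmDelta p x0 x)"

end

theory Submission
  imports Defs
begin

(*
  Let iota be the substitution (p, x0, x1, ..., x4) |-> (1/p, x0 x1 x2 x3 x4, 1/x1, ..., 1/x4).
  Inverting the x_i and multiplying by (x1 x2 x3 x4)^m sends the orbit sum sym_{i1 i2 i3 i4}
  to sym_{m-i4, m-i3, m-i2, m-i1}.  Hence iota fixes Omega(T) and the four blocks
  x0^2 (sum of sym_{...}) in terms of which Omega(T1), Omega(T2), Omega(T3), Omega(Delta) are
  written with coefficients in Q(p); so iota acts on the images of T1, T2, T3, Delta by a
  triangular linear map with coefficients in Z[p].  As also x0^2 x1 x2 x3 x4 = p^10 Omega(Delta),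
  the claim becomes a functional equation for the e_k as polynomials in free variables
  T, T1, T2, T3, Delta, which is a finite computation.
*)

definition exponent_orbit :: "(nat \<Rightarrow> nat) \<Rightarrow> (nat \<Rightarrow> nat) set" where
  "exponent_orbit e = (\<lambda>\<sigma>. e \<circ> \<sigma>) ` {\<sigma>. \<sigma> permutes {0..<4}}"

lemma msym_eq_sum_exponent_orbit:
  "msym i1 i2 i3 i4 x = (\<Sum>b \<in> exponent_orbit (expv i1 i2 i3 i4). \<Prod>i<4. x i ^ b i)"
  unfolding msym_def exponent_orbit_def by (rule sum.cong) auto

lemma exponent_orbit_comp_permutes:
  assumes "\<tau> permutes {0..<4}"
  shows "exponent_orbit (e \<circ> \<tau>) = exponent_orbit e"
proof -
  have "exponent_orbit (e \<circ> \<tau>) = (\<lambda>\<sigma>. e \<circ> \<sigma>) ` {\<tau> \<circ> \<sigma> |\<sigma>. \<sigma> permutes {0..<4}}"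
    unfolding exponent_orbit_def by (auto simp: comp_assoc)
  then show ?thesis
    unfolding image_compose_permutations_left[OF assms] exponent_orbit_def .
qed

lemma msym_reverse: "msym a b c d x = msym d c b a x"
proof -
  define \<rho> :: "nat \<Rightarrow> nat" where "\<rho> i = (if i < 4 then 3 - i else i)" for i
  have \<rho>: "\<rho> permutes {0..<4}"
    by (rule bij_imp_permutes, rule bij_betw_byWitness[where f' = \<rho>]) (auto simp: \<rho>_def)
  have reversed: "expv a b c d \<circ> \<rho> = expv d c b a"
  proof
    fix i :: nat
    show "(expv a b c d \<circ> \<rho>) i = expv d c b a i"
      by (cases "i < 4") (auto simp: expv_def \<rho>_def less_Suc_eq numeral_eq_Suc)
  qed
  show ?thesis
    using exponent_orbit_comp_permutes[OF \<rho>, of "expv a b c d"]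
    unfolding msym_eq_sum_exponent_orbit reversed by simp
qed

lemma msym_const: "msym c c c c x = (\<Prod>i<4. x i) ^ c"
proof -
  have const: "expv c c c c = (\<lambda>i. if i < 4 then c else 0)"
    by (auto simp: expv_def fun_eq_iff less_Suc_eq numeral_eq_Suc)
  have "expv c c c c \<circ> \<sigma> = expv c c c c" if "\<sigma> permutes {0..<4}" for \<sigma>
  proof -
    have "\<sigma> i < 4 \<longleftrightarrow> i < 4" for i
      using permutes_in_image[OF that, of i] by simp
    then show ?thesis by (simp add: const fun_eq_iff)
  qed
  then have "exponent_orbit (expv c c c c) = (\<lambda>_. expv c c c c) ` {\<sigma> :: nat \<Rightarrow> nat. \<sigma> permutes {0..<4}}"
    unfolding exponent_orbit_def by (intro image_cong) auto
  also have "\<dots> = {expv c c c c}"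
    using permutes_id by (intro image_constant) blast
  finally have "exponent_orbit (expv c c c c) = {expv c c c c}" .
  then show ?thesis
    by (simp add: msym_eq_sum_exponent_orbit const prod_power_distrib)
qed

definition exponent_compl :: "nat \<Rightarrow> (nat \<Rightarrow> nat) \<Rightarrow> nat \<Rightarrow> nat" where
  "exponent_compl m e = (\<lambda>i. if i < 4 then m - e i else 0)"

lemma exponent_compl_comp_permutes:
  assumes "\<sigma> permutes {0..<4}"
  shows "exponent_compl m (e \<circ> \<sigma>) = exponent_compl m e \<circ> \<sigma>"
  using permutes_in_image[OF assms] permutes_not_in[OF assms]
  by (fastforce simp: exponent_compl_def fun_eq_iff)

lemma exponent_orbit_compl: "exponent_orbit (exponent_compl m e) = exponent_compl m ` exponent_orbit e"
  unfolding exponent_orbit_def image_image by (rule image_cong) (simp_all add: exponent_compl_comp_permutes)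

lemma inj_on_exponent_compl:
  assumes "\<forall>i<4. e i \<le> m"
  shows "inj_on (exponent_compl m) (exponent_orbit e)"
proof (rule inj_onI)
  fix b b' assume "b \<in> exponent_orbit e" "b' \<in> exponent_orbit e"
    and eq: "exponent_compl m b = exponent_compl m b'"
  then obtain \<sigma> \<sigma>' where \<sigma>: "\<sigma> permutes {0..<4}" "b = e \<circ> \<sigma>"
    and \<sigma>': "\<sigma>' permutes {0..<4}" "b' = e \<circ> \<sigma>'"
    unfolding exponent_orbit_def by blast
  show "b = b'"
  proof
    fix i show "b i = b' i"
    proof (cases "i < 4")
      case True
      then have "e (\<sigma> i) \<le> m" "e (\<sigma>' i) \<le> m"
        using assms permutes_in_image[OF \<sigma>(1)] permutes_in_image[OF \<sigma>'(1)] by auto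
      then show ?thesis
        using fun_cong[OF eq, of i] True by (simp add: \<sigma>(2) \<sigma>'(2) exponent_compl_def)
    next
      case False
      then show ?thesis by (simp add: \<sigma>(2) \<sigma>'(2) permutes_not_in[OF \<sigma>(1)] permutes_not_in[OF \<sigma>'(1)])
    qed
  qed
qed

lemma msym_inverse:
  fixes x :: "nat \<Rightarrow> 'a::field"
  assumes "\<forall>i<4. x i \<noteq> 0" and "i1 \<le> m" "i2 \<le> m" "i3 \<le> m" "i4 \<le> m"
  shows "msym i1 i2 i3 i4 (\<lambda>i. inverse (x i)) * (\<Prod>i<4. x i) ^ m =
    msym (m - i1) (m - i2) (m - i3) (m - i4) x"
proof -
  let ?e = "expv i1 i2 i3 i4"
  have bounded: "\<forall>i<4. ?e i \<le> m"
    using assms(2-5) by (auto simp: expv_def less_Suc_eq numeral_eq_Suc)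
  have monomial: "(\<Prod>i<4. inverse (x i) ^ b i) * (\<Prod>i<4. x i) ^ m = (\<Prod>i<4. x i ^ exponent_compl m b i)"
    if "b \<in> exponent_orbit ?e" for b
  proof -
    have "b i \<le> m" if "i < 4" for i
      using \<open>b \<in> exponent_orbit ?e\<close> bounded permutes_in_image that
      unfolding exponent_orbit_def by fastforce
    then have "inverse (x i) ^ b i * x i ^ m = x i ^ exponent_compl m b i" if "i < 4" for i
      using assms(1) that by (simp add: exponent_compl_def power_diff field_simps)
    then have "(\<Prod>i<4. inverse (x i) ^ b i * x i ^ m) = (\<Prod>i<4. x i ^ exponent_compl m b i)"
      by (intro prod.cong) auto
    then show ?thesis
      by (simp add: prod.distrib prod_power_distrib)
  qed
  have compl: "expv (m - i1) (m - i2) (m - i3) (m - i4) = exponent_compl m ?e"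
    by (auto simp: exponent_compl_def expv_def fun_eq_iff less_Suc_eq numeral_eq_Suc)
  have "msym i1 i2 i3 i4 (\<lambda>i. inverse (x i)) * (\<Prod>i<4. x i) ^ m =
      (\<Sum>b\<in>exponent_orbit ?e. (\<Prod>i<4. inverse (x i) ^ b i) * (\<Prod>i<4. x i) ^ m)"
    by (simp add: msym_eq_sum_exponent_orbit sum_distrib_right)
  also have "\<dots> = (\<Sum>b\<in>exponent_orbit ?e. \<Prod>i<4. x i ^ exponent_compl m b i)"
    by (rule sum.cong[OF refl]) (rule monomial)
  also have "\<dots> = (\<Sum>b\<in>exponent_compl m ` exponent_orbit ?e. \<Prod>i<4. x i ^ b i)"
    by (simp add: sum.reindex[OF inj_on_exponent_compl[OF bounded]])
  also have "\<dots> = msym (m - i1) (m - i2) (m - i3) (m - i4) x"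
    by (simp only: msym_eq_sum_exponent_orbit compl exponent_orbit_compl)
  finally show ?thesis .
qed

definition sym_block0 :: "'a::field \<Rightarrow> (nat \<Rightarrow> 'a) \<Rightarrow> 'a" where
  "sym_block0 x0 x = x0^2 * msym 1 1 1 1 x"
definition sym_block1 :: "'a::field \<Rightarrow> (nat \<Rightarrow> 'a) \<Rightarrow> 'a" where
  "sym_block1 x0 x = x0^2 * (msym 2 1 1 1 x + msym 1 1 1 0 x)"
definition sym_block2 :: "'a::field \<Rightarrow> (nat \<Rightarrow> 'a) \<Rightarrow> 'a" where
  "sym_block2 x0 x = x0^2 * (msym 2 2 1 1 x + msym 2 1 1 0 x + msym 1 1 0 0 x)"
definition sym_block3 :: "'a::field \<Rightarrow> (nat \<Rightarrow> 'a) \<Rightarrow> 'a" where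
  "sym_block3 x0 x = x0^2 * (msym 2 2 2 1 x + msym 2 2 1 0 x + msym 2 1 0 0 x + msym 1 0 0 0 x)"

context
  fixes x :: "nat \<Rightarrow> 'a::field"
  assumes nonzero: "\<forall>i<4. x i \<noteq> 0"
begin

lemma msym_dual:
  assumes "a \<le> m" "b \<le> m" "c \<le> m" "d \<le> m"
  shows "(\<Prod>i<4. x i) ^ m * msym a b c d (\<lambda>i. inverse (x i)) = msym (m - d) (m - c) (m - b) (m - a) x"
  using msym_inverse[OF nonzero assms] msym_reverse by (metis mult.commute)

lemma sym_block0_dual: "sym_block0 (x0 * (\<Prod>i<4. x i)) (\<lambda>i. inverse (x i)) = sym_block0 x0 x"
  by (simp add: sym_block0_def power_mult_distrib mult.assoc msym_dual)

lemma sym_block1_dual: "sym_block1 (x0 * (\<Prod>i<4. x i)) (\<lambda>i. inverse (x i)) = sym_block1 x0 x"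
  by (simp add: sym_block1_def power_mult_distrib mult.assoc distrib_left msym_dual add.commute)

lemma sym_block2_dual: "sym_block2 (x0 * (\<Prod>i<4. x i)) (\<lambda>i. inverse (x i)) = sym_block2 x0 x"
  by (simp add: sym_block2_def power_mult_distrib mult.assoc distrib_left msym_dual add_ac)

lemma sym_block3_dual: "sym_block3 (x0 * (\<Prod>i<4. x i)) (\<lambda>i. inverse (x i)) = sym_block3 x0 x"
  by (simp add: sym_block3_def power_mult_distrib mult.assoc distrib_left msym_dual add_ac)

lemma OmT_dual: "OmT (inverse p) (x0 * (\<Prod>i<4. x i)) (\<lambda>i. inverse (x i)) = OmT p x0 x"
  (* the simplifier normalises 1 - 0 to Suc 0, hence the instance of msym_const at Suc 0 *)
  by (simp add: OmT_def distrib_left mult.assoc msym_dual[of _ 1, unfolded power_one_right]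
      msym_const[of 0 x] msym_const[of 1 x] msym_const[of "Suc 0" x] add_ac)

end

lemma OmT1_eq_blocks:
  "OmT1 p x0 x = inverse (p^8) *
    ((p - 1)^2 * (p + 1) * (4*p^4 + 3*p^3 + 3*p^2 + p + 1) * sym_block0 x0 x
     + p^4 * (p - 1) * (3*p^2 + 2*p + 1) * sym_block1 x0 x
     + p^5 * (p - 1) * (p + 1) * sym_block2 x0 x + p^7 * sym_block3 x0 x)"
  by (simp add: OmT1_def sym_block0_def sym_block1_def sym_block2_def sym_block3_def algebra_simps)

lemma OmT2_eq_blocks:
  "OmT2 p x0 x = inverse (p^8) *
    ((p - 1) * (4*p^4 + 3*p^3 + 3*p^2 + p + 1) * sym_block0 x0 x
     + p^2 * (p - 1) * (p^2 + p + 1) * sym_block1 x0 x + p^5 * sym_block2 x0 x)"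
  by (simp add: OmT2_def sym_block0_def sym_block1_def sym_block2_def algebra_simps)

lemma OmT3_eq_blocks:
  "OmT3 p x0 x = inverse (p^10) * ((p - 1) * (p + 1) * (p^2 + 1) * sym_block0 x0 x + p^4 * sym_block1 x0 x)"
  by (simp add: OmT3_def sym_block0_def sym_block1_def algebra_simps)

lemma OmDelta_eq_block: "OmDelta p x0 x = inverse (p^10) * sym_block0 x0 x"
  by (simp add: OmDelta_def sym_block0_def algebra_simps)

(*
  Found by solving the triangular system OmT1_eq_blocks, ..., OmDelta_eq_block for the blocks and
  substituting the result into the same system at 1/p.
*)
definition dual_T1 :: "'a::comm_ring_1 \<Rightarrow> 'a \<Rightarrow> 'a \<Rightarrow> 'a \<Rightarrow> 'a \<Rightarrow> 'a" where
  "dual_T1 p T1 T2 T3 D = p^2 * (T1 + (1 - p^4) * T2 + (1 + p^2) * (1 - p^6) * T3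
     + (1 + p^2) * (1 - p^6) * (1 - p^8) * D)"
definition dual_T2 :: "'a::comm_ring_1 \<Rightarrow> 'a \<Rightarrow> 'a \<Rightarrow> 'a \<Rightarrow> 'a" where
  "dual_T2 p T2 T3 D = p^6 * (T2 + (1 - p^6) * T3 + (1 + p^2 + p^4) * (1 - p^8) * D)"
definition dual_T3 :: "'a::comm_ring_1 \<Rightarrow> 'a \<Rightarrow> 'a \<Rightarrow> 'a" where
  "dual_T3 p T3 D = p^12 * (T3 + (1 - p^8) * D)"

context
  fixes p :: "'a::field" and x :: "nat \<Rightarrow> 'a"
  assumes p: "p \<noteq> 0" and nonzero: "\<forall>i<4. x i \<noteq> 0"
begin

lemma OmDelta_dual: "OmDelta (inverse p) (x0 * (\<Prod>i<4. x i)) (\<lambda>i. inverse (x i)) = p^20 * OmDelta p x0 x"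
  unfolding OmDelta_eq_block sym_block0_dual[OF nonzero] using p by (simp add: field_simps)

lemma OmT3_dual:
  "OmT3 (inverse p) (x0 * (\<Prod>i<4. x i)) (\<lambda>i. inverse (x i)) =
    dual_T3 p (OmT3 p x0 x) (OmDelta p x0 x)"
  unfolding OmT3_eq_blocks OmDelta_eq_block sym_block0_dual[OF nonzero] sym_block1_dual[OF nonzero]
    dual_T3_def
  using p by (simp add: field_simps) algebra

lemma OmT2_dual:
  "OmT2 (inverse p) (x0 * (\<Prod>i<4. x i)) (\<lambda>i. inverse (x i)) =
    dual_T2 p (OmT2 p x0 x) (OmT3 p x0 x) (OmDelta p x0 x)"
  unfolding OmT2_eq_blocks OmT3_eq_blocks OmDelta_eq_block sym_block0_dual[OF nonzero]
    sym_block1_dual[OF nonzero] sym_block2_dual[OF nonzero] dual_T2_def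
  using p by (simp add: field_simps) algebra

lemma OmT1_dual:
  "OmT1 (inverse p) (x0 * (\<Prod>i<4. x i)) (\<lambda>i. inverse (x i)) =
    dual_T1 p (OmT1 p x0 x) (OmT2 p x0 x) (OmT3 p x0 x) (OmDelta p x0 x)"
  unfolding OmT1_eq_blocks OmT2_eq_blocks OmT3_eq_blocks OmDelta_eq_block sym_block0_dual[OF nonzero]
    sym_block1_dual[OF nonzero] sym_block2_dual[OF nonzero] sym_block3_dual[OF nonzero] dual_T1_def
  using p by (simp add: field_simps) algebra

end

lemma ecoeff_functional_equation:
  fixes p T T1 T2 T3 D :: "'a::field_char_0"
  assumes "k \<le> 14" and "p \<noteq> 0" and "D \<noteq> 0"
  shows "ecoeff (14 - k) p T T1 T2 T3 D =
    - inverse (p^6) * power_int (p^10 * D) (7 - int k) *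
      ecoeff k (inverse p) T (dual_T1 p T1 T2 T3 D) (dual_T2 p T2 T3 D) (dual_T3 p T3 D) (p^20 * D)"
    (is "?functional_equation k")
proof -
  have "\<forall>n\<in>{..14}. ?functional_equation n"
    by (simp add: atMost_nat_numeral atMost_Suc; intro conjI;
        simp add: ecoeff_def Ecoeffs_def dual_T1_def dual_T2_def dual_T3_def power_int_def assms(2,3);
        simp add: field_simps assms(2,3); algebra)
  with assms(1) show ?thesis by simp
qed

theorem proposition6p1:
  fixes p x0 :: "'a::field_char_0" and x :: "nat \<Rightarrow> 'a" and k :: nat
  assumes "k \<le> 14" and "p \<noteq> 0" and "x0 \<noteq> 0" and "\<forall>i<4. x i \<noteq> 0"
  shows "OmE (14 - k) p x0 x =
    - inverse (p ^ 6) * power_int (x0^2 * (\<Prod>i<4. x i)) (7 - int k) *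
      OmE k (inverse p) (x0 * (\<Prod>i<4. x i)) (\<lambda>i. inverse (x i))"
proof -
  have Delta: "x0^2 * (\<Prod>i<4. x i) = p^10 * OmDelta p x0 x"
    using assms(2) by (simp add: OmDelta_def msym_const)
  have "OmDelta p x0 x \<noteq> 0"
    using assms(2-4) by (simp add: OmDelta_def msym_const)
  from ecoeff_functional_equation[OF assms(1,2) this] show ?thesis
    unfolding Delta OmE_def OmT_dual[OF assms(4)] OmT1_dual[OF assms(2,4)] OmT2_dual[OF assms(2,4)]
      OmT3_dual[OF assms(2,4)] OmDelta_dual[OF assms(2,4)] .
qed

end
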